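(* Let $0\le t_0<t$, let $\bm{D}\in\mathbb{R}^{n\times n}$ be a constant diagonal matrix with positive diagonal entries, and take $\bm{Q}_\tau=2\bm{D}$, $\bm{A}_\tau=\bm{0}$, $\hat{\bm{B}}_\tau=\sqrt2\,\bm{I}$ for all $\tau\in[t_0,t]$. Then, with $\bm{M}_{tt_0}$ defined in the context and $\omega_i:=2\sqrt{D_{ii}}$, for all $\bm{x},\bm{y}\in\mathbb{R}^n$, $$\frac12\begin{pmatrix}\bm{x}\\\bm{y}\end{pmatrix}^{\!\top}\bm{M}_{tt_0}\begin{pmatrix}\bm{x}\\\bm{y}\end{pmatrix}=\frac12\sum_{i=1}^n\frac{\omega_i(x_i^2+y_i^2)\cosh(\omega_i(t-t_0))-2\omega_i x_iy_i}{2\sinh(\omega_i(t-t_0))}.$$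
   Context: For matrix functions $\bm{A}_\tau\in\mathbb{R}^{n\times n}$, $\hat{\bm{B}}_\tau\in\mathbb{R}^{n\times m}$, $\bm{Q}_\tau\succeq\bm{0}$ on $[t_0,t]$: $\bm{\Pi}(\tau,\bm{K}_1,t)$ denotes the value at $\tau\in[t_0,t]$ of the solution, solved backward in time, of the Riccati ODE $\dot{\bm{K}}_\tau=-\bm{A}_\tau^\top\bm{K}_\tau-\bm{K}_\tau\bm{A}_\tau+\bm{K}_\tau\hat{\bm{B}}_\tau\hat{\bm{B}}_\tau^\top\bm{K}_\tau-\bm{Q}_\tau$, $\bm{K}_{\tau=t}=\bm{K}_1$. Let $\hat{\bm{A}}_\tau:=\bm{A}_\tau-\hat{\bm{B}}_\tau\hat{\bm{B}}_\tau^\top\bm{\Pi}(\tau,\bm{0},t)$, $\hat{\bm{\Phi}}_{t\tau}$ its state transition matrix from $\tau$ to $t$, $\hat{\bm{\Gamma}}_{tt_0}:=\int_{t_0}^t\hat{\bm{\Phi}}_{t\sigma}\hat{\bm{B}}_\sigma\hat{\bm{B}}_\sigma^\top\hat{\bm{\Phi}}_{t\sigma}^\top\mathrm{d}\sigma$, and $$\bm{M}_{tt_0}:=\begin{bmatrix}\hat{\bm{\Phi}}_{tt_0}^\top\hat{\bm{\Gamma}}_{tt_0}^{-1}\hat{\bm{\Phi}}_{tt_0}+\bm{\Pi}(t_0,\bm{0},t) & -\hat{\bm{\Phi}}_{tt_0}^\top\hat{\bm{\Gamma}}_{tt_0}^{-1}\\ -\hat{\bm{\Gamma}}_{tt_0}^{-1}\hat{\bm{\Phi}}_{tt_0}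 & \hat{\bm{\Gamma}}_{tt_0}^{-1}\end{bmatrix}.$$ *)

theory Defs
  imports "HOL-Analysis.Analysis"
begin

text \<open>Solution on [t0,t] of the backward Riccati ODE
  K' = -A^T K - K A + K B B^T K - Q, K(t) = K1 (normalised to 0 outside [t0,t]
  so that it is unique when it exists).\<close>
definition riccati_sol ::
  "(real \<Rightarrow> real^'n^'n) \<Rightarrow> (real \<Rightarrow> real^'m^'n) \<Rightarrow> (real \<Rightarrow> real^'n^'n)
   \<Rightarrow> real \<Rightarrow> real \<Rightarrow> real^'n^'n \<Rightarrow> real \<Rightarrow> real^'n^'n" where
  "riccati_sol A B Q t0 t K1 = (THE K.
     (\<forall>\<tau>\<in>{t0..t}. (K has_vector_derivative
        (- (transpose (A \<tau>) ** K \<tau>) - K \<tau> ** A \<tau>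
         + K \<tau> ** B \<tau> ** transpose (B \<tau>) ** K \<tau> - Q \<tau>)) (at \<tau> within {t0..t}))
     \<and> K t = K1 \<and> (\<forall>\<tau>. \<tau> \<notin> {t0..t} \<longrightarrow> K \<tau> = 0))"

definition Pi_ric ::
  "(real \<Rightarrow> real^'n^'n) \<Rightarrow> (real \<Rightarrow> real^'m^'n) \<Rightarrow> (real \<Rightarrow> real^'n^'n)
   \<Rightarrow> real \<Rightarrow> real \<Rightarrow> real^'n^'n \<Rightarrow> real \<Rightarrow> real^'n^'n" where
  "Pi_ric A B Q t0 \<tau> K1 t = riccati_sol A B Q t0 t K1 \<tau>"

definition A_hat ::
  "(real \<Rightarrow> real^'n^'n) \<Rightarrow> (real \<Rightarrow> real^'m^'n) \<Rightarrow> (real \<Rightarrow> real^'n^'n)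
   \<Rightarrow> real \<Rightarrow> real \<Rightarrow> real \<Rightarrow> real^'n^'n" where
  "A_hat A B Q t0 t \<tau> = A \<tau> - B \<tau> ** transpose (B \<tau>) ** Pi_ric A B Q t0 \<tau> 0 t"

definition trans_fun ::
  "(real \<Rightarrow> real^'n^'n) \<Rightarrow> real \<Rightarrow> real \<Rightarrow> real \<Rightarrow> real \<Rightarrow> real^'n^'n" where
  "trans_fun F t0 t \<tau> = (THE \<Phi>.
     (\<forall>s\<in>{t0..t}. (\<Phi> has_vector_derivative (F s ** \<Phi> s)) (at s within {t0..t}))
     \<and> \<Phi> \<tau> = mat 1 \<and> (\<forall>s. s \<notin> {t0..t} \<longrightarrow> \<Phi> s = 0))"

definition Phi_hat ::
  "(real \<Rightarrow> real^'n^'n) \<Rightarrow> (real \<Rightarrow> real^'m^'n) \<Rightarrow> (real \<Rightarrow> real^'n^'n)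
   \<Rightarrow> real \<Rightarrow> real \<Rightarrow> real \<Rightarrow> real^'n^'n" where
  "Phi_hat A B Q t0 t \<tau> = trans_fun (A_hat A B Q t0 t) t0 t \<tau> t"

definition Gamma_hat ::
  "(real \<Rightarrow> real^'n^'n) \<Rightarrow> (real \<Rightarrow> real^'m^'n) \<Rightarrow> (real \<Rightarrow> real^'n^'n)
   \<Rightarrow> real \<Rightarrow> real \<Rightarrow> real^'n^'n" where
  "Gamma_hat A B Q t0 t = integral {t0..t} (\<lambda>\<sigma>.
     Phi_hat A B Q t0 t \<sigma> ** B \<sigma> ** transpose (B \<sigma>) ** transpose (Phi_hat A B Q t0 t \<sigma>))"

text \<open>The 2n x 2n block matrix M_{t t0}, indexed by 'n + 'n
  (Inl = first block, Inr = second block).\<close>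
definition M_mat ::
  "(real \<Rightarrow> real^'n^'n) \<Rightarrow> (real \<Rightarrow> real^'m^'n) \<Rightarrow> (real \<Rightarrow> real^'n^'n)
   \<Rightarrow> real \<Rightarrow> real \<Rightarrow> real^('n + 'n)^('n + 'n)" where
  "M_mat A B Q t0 t = (let
      P = Phi_hat A B Q t0 t t0;
      Gi = matrix_inv (Gamma_hat A B Q t0 t);
      M11 = transpose P ** Gi ** P + Pi_ric A B Q t0 t0 0 t;
      M12 = - (transpose P ** Gi);
      M21 = - (Gi ** P);
      M22 = Gi
    in (\<chi> i j. case i of
          Inl a \<Rightarrow> (case j of Inl b \<Rightarrow> M11 $ a $ b | Inr b \<Rightarrow> M12 $ a $ b)
        | Inr a \<Rightarrow> (case j of Inl b \<Rightarrow> M21 $ a $ b | Inr b \<Rightarrow> M22 $ a $ b)))"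

definition stack :: "real^'n \<Rightarrow> real^'n \<Rightarrow> real^('n + 'n)" where
  "stack x y = (\<chi> i. case i of Inl a \<Rightarrow> x $ a | Inr b \<Rightarrow> y $ b)"

end

theory Submission
  imports Defs
begin

(*
  With A = 0 and B = sqrt 2 I every matrix in sight is diagonal, so the problem splits into
  scalar ones with frequencies w = 2 sqrt D_ii.  The Riccati equation becomes
  k' = 2 k^2 - w^2/2 with k(t) = 0, solved by k = (w/2) tanh (w (t - tau)); the closed loop
  A_hat = -2 Pi then has transition factor cosh (w (t - s)) / cosh (w (t - sigma)), hence
  Phi_hat = sech (w (t - sigma)) and Gamma_hat = int 2 sech^2 = (2/w) tanh (w (t - t0)).
  Substituting, each coordinate block of M is (w/2) [coth, -csch; -csch, coth] at w (t - t0),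
  whose quadratic form is the claim.  Since the solutions of the Riccati equation and of the
  transition equation are defined by definite description, the real work is uniqueness: a
  Gronwall estimate for solutions whose difference has a linearly bounded derivative, together
  with the Frobenius bound norm (A ** B) <= norm A * norm B.
*)

section \<open>Diagonal matrices\<close>

definition diag_mat :: "('n \<Rightarrow> real) \<Rightarrow> real^'n^'n" where
  "diag_mat f = (\<chi> i j. if i = j then f i else 0)"

lemma diag_mat_nth [simp]: "diag_mat f $ i $ j = (if i = j then f i else 0)"
  by (simp add: diag_mat_def)

lemma diag_mat_eq_iff: "diag_mat f = diag_mat g \<longleftrightarrow> f = g"
  by (auto simp: vec_eq_iff fun_eq_iff)

lemma diag_mat_add [simp]: "diag_mat f + diag_mat g = diag_mat (\<lambda>i. f i + g i)"
  and diag_mat_uminus [simp]: "- diag_mat f = diag_mat (\<lambda>i. - f i)"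
  and diag_mat_scaleR: "c *\<^sub>R diag_mat f = diag_mat (\<lambda>i. c * f i)"
  and transpose_diag_mat [simp]: "transpose (diag_mat f) = diag_mat f"
  by (simp_all add: vec_eq_iff transpose_def)

lemma mat_eq_diag_mat: "mat c = diag_mat (\<lambda>_. c)"
  by (simp add: vec_eq_iff mat_def)

lemma diag_mat_zero [simp]: "diag_mat (\<lambda>_. 0) = 0"
  by (simp add: vec_eq_iff)

lemma diag_mat_diagonal:
  assumes "\<forall>i j. i \<noteq> j \<longrightarrow> D $ i $ j = 0"
  shows "D = diag_mat (\<lambda>i. D $ i $ i)"
  using assms by (auto simp: vec_eq_iff)

lemma diag_mat_eq_sum:
  fixes f :: "'n::finite \<Rightarrow> real"
  shows "diag_mat f = (\<Sum>k\<in>UNIV. f k *\<^sub>R diag_mat (\<lambda>i. if i = k then 1 else 0))"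
  by (simp add: vec_eq_iff sum_component if_distrib[of "times _"] if_distribR cong del: if_weak_cong)

lemma matrix_mul_diag_mat [simp]:
  fixes f g :: "'n::finite \<Rightarrow> real"
  shows "diag_mat f ** diag_mat g = diag_mat (\<lambda>i. f i * g i)"
  by (simp add: vec_eq_iff matrix_matrix_mult_def if_distrib[of "times _"] if_distribR cong del: if_weak_cong)

lemma has_vector_derivative_diag_mat:
  assumes "\<And>i. (g i has_real_derivative g' i) (at s within S)"
  shows "((\<lambda>s. diag_mat (\<lambda>i. g i s)) has_vector_derivative diag_mat g') (at s within S)"
  unfolding diag_mat_eq_sum[of g'] diag_mat_eq_sum[of "\<lambda>i. g i _"]
  by (auto intro!: derivative_eq_intros assms simp del: diag_mat_scaleR)

lemma matrix_inv_diag_mat: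
  assumes "\<And>i. f i \<noteq> 0"
  shows "matrix_inv (diag_mat f) = diag_mat (\<lambda>i. 1 / f i)"
  unfolding matrix_inv_def
proof (rule some_equality)
  show "diag_mat f ** diag_mat (\<lambda>i. 1 / f i) = mat 1 \<and> diag_mat (\<lambda>i. 1 / f i) ** diag_mat f = mat 1"
    using assms by (simp add: mat_eq_diag_mat)
  fix B assume inverse: "diag_mat f ** B = mat 1 \<and> B ** diag_mat f = mat 1"
  have "B = (B ** diag_mat f) ** diag_mat (\<lambda>i. 1 / f i)"
    using assms by (simp flip: matrix_mul_assoc mat_eq_diag_mat)
  also have "\<dots> = diag_mat (\<lambda>i. 1 / f i)"
    using inverse by simp
  finally show "B = diag_mat (\<lambda>i. 1 / f i)" .
qed

lemma inner_diag_mat: "x \<bullet> (diag_mat f *v y) = (\<Sum>i\<in>UNIV. f i * x $ i * y $ i)"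
  by (simp add: inner_vec_def matrix_vector_mult_def if_distrib[of times] if_distribR ac_simps
      cong del: if_weak_cong)

section \<open>Matrix norms and products\<close>

lemma power2_norm_vec: "(norm x)\<^sup>2 = (\<Sum>i\<in>UNIV. (norm (x $ i))\<^sup>2)"
  by (simp add: norm_vec_def L2_set_def sum_nonneg)

lemma norm_transpose: "norm (transpose A) = norm (A :: real^'n^'m)"
proof -
  have "(norm (transpose A))\<^sup>2 = (\<Sum>i\<in>UNIV. \<Sum>j\<in>UNIV. (A $ j $ i)\<^sup>2)"
    by (simp add: power2_norm_vec transpose_def)
  also have "\<dots> = (\<Sum>j\<in>UNIV. \<Sum>i\<in>UNIV. (A $ j $ i)\<^sup>2)"
    by (rule sum.swap)
  also have "\<dots> = (norm A)\<^sup>2"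
    by (simp add: power2_norm_vec)
  finally show ?thesis
    by simp
qed

lemma norm_matrix_mult_le:
  fixes A :: "real^'k^'n" and B :: "real^'m^'k"
  shows "norm (A ** B) \<le> norm A * norm B"
proof (rule power2_le_imp_le)
  have entry: "((A ** B) $ i $ j)\<^sup>2 \<le> (norm (A $ i))\<^sup>2 * (norm (transpose B $ j))\<^sup>2" for i j
  proof -
    have "(A ** B) $ i $ j = A $ i \<bullet> transpose B $ j"
      by (simp add: matrix_matrix_mult_def inner_vec_def transpose_def)
    then show ?thesis
      using Cauchy_Schwarz_ineq[of "A $ i" "transpose B $ j"] by (simp add: power2_norm_eq_inner)
  qed
  have "(norm (A ** B))\<^sup>2 = (\<Sum>i\<in>UNIV. \<Sum>j\<in>UNIV. ((A ** B) $ i $ j)\<^sup>2)"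
    by (simp add: power2_norm_vec)
  also have "\<dots> \<le> (\<Sum>i\<in>UNIV. \<Sum>j\<in>UNIV. (norm (A $ i))\<^sup>2 * (norm (transpose B $ j))\<^sup>2)"
    by (intro sum_mono entry)
  also have "\<dots> = (norm A)\<^sup>2 * (norm (transpose B))\<^sup>2"
    by (simp add: power2_norm_vec[of A] power2_norm_vec[of "transpose B"] sum_product)
  finally show "(norm (A ** B))\<^sup>2 \<le> (norm A * norm B)\<^sup>2"
    by (simp add: norm_transpose power_mult_distrib)
qed simp

lemma matrix_diff_ldistrib: "(A :: real^'k^'n) ** (B - C) = A ** B - A ** C"
  by (simp add: vec_eq_iff matrix_matrix_mult_def sum_subtractf algebra_simps)

lemma matrix_diff_rdistrib: "(A - B) ** (C :: real^'m^'k) = A ** C - B ** C"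
  by (simp add: vec_eq_iff matrix_matrix_mult_def sum_subtractf algebra_simps)

lemma transpose_zero [simp]: "transpose 0 = 0"
  by (simp add: transpose_def vec_eq_iff)

section \<open>Uniqueness of solutions of ODEs\<close>

lemma exp_weighted_mono:
  fixes f f' :: "real \<Rightarrow> real"
  assumes "a \<le> b" and "continuous_on {a..b} f"
    and "\<And>x. x \<in> {a<..<b} \<Longrightarrow> (f has_real_derivative f' x) (at x)"
    and "\<And>x. x \<in> {a<..<b} \<Longrightarrow> L * f x \<le> f' x"
  shows "f a * exp (- L * a) \<le> f b * exp (- L * b)"
proof (rule DERIV_nonneg_imp_increasing_open[OF \<open>a \<le> b\<close>])
  fix x assume "a < x" "x < b"
  then have "((\<lambda>x. f x * exp (- L * x)) has_real_derivative (f' x - L * f x) * exp (- L * x)) (at x)"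
    by (auto intro!: derivative_eq_intros assms(3) simp: algebra_simps)
  moreover have "(f' x - L * f x) * exp (- L * x) \<ge> 0"
    using assms(4) \<open>a < x\<close> \<open>x < b\<close> by simp
  ultimately show "\<exists>y. ((\<lambda>x. f x * exp (- L * x)) has_real_derivative y) (at x) \<and> 0 \<le> y"
    by blast
qed (intro continuous_intros assms(2))

lemma gronwall_nonpos:
  fixes f f' :: "real \<Rightarrow> real"
  assumes cont: "continuous_on {a..b} f"
    and deriv: "\<And>x. x \<in> {a<..<b} \<Longrightarrow> (f has_real_derivative f' x) (at x)"
    and growth: "\<And>x. x \<in> {a<..<b} \<Longrightarrow> \<bar>f' x\<bar> \<le> L * f x"
    and c: "c \<in> {a..b}" "f c = 0" and s: "s \<in> {a..b}"
  shows "f s \<le> 0"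
proof (cases "c \<le> s")
  case True
  have "- f c * exp (- L * c) \<le> - f s * exp (- L * s)"
  proof (rule exp_weighted_mono[OF True])
    show "continuous_on {c..s} (\<lambda>x. - f x)"
      using c s by (intro continuous_on_minus continuous_on_subset[OF cont]) auto
    fix x assume "x \<in> {c<..<s}"
    with c(1) s have x: "x \<in> {a<..<b}"
      by auto
    then show "((\<lambda>x. - f x) has_real_derivative - f' x) (at x)"
      by (intro DERIV_minus deriv)
    show "L * - f x \<le> - f' x"
      using growth[OF x] by auto
  qed
  then show ?thesis
    using c by (simp add: mult_le_0_iff)
next
  case False
  have "f s * exp (- (- L) * s) \<le> f c * exp (- (- L) * c)"
  proof (rule exp_weighted_mono)
    show "s \<le> c" "continuous_on {s..c} f"
      using False c s by (auto intro: continuous_on_subset[OF cont])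
    fix x assume "x \<in> {s<..<c}"
    with c(1) s have x: "x \<in> {a<..<b}"
      by auto
    then show "(f has_real_derivative f' x) (at x)"
      by (rule deriv)
    show "- L * f x \<le> f' x"
      using growth[OF x] by auto
  qed
  then show ?thesis
    using c by (simp add: mult_le_0_iff)
qed

lemma vanishing_if_derivative_linearly_bounded:
  fixes E E' :: "real \<Rightarrow> 'a::real_inner"
  assumes deriv: "\<And>s. s \<in> {a..b} \<Longrightarrow> (E has_vector_derivative E' s) (at s within {a..b})"
    and bound: "\<And>s. s \<in> {a..b} \<Longrightarrow> norm (E' s) \<le> C * norm (E s)"
    and "c \<in> {a..b}" "E c = 0" "s \<in> {a..b}"
  shows "E s = 0"
proof -
  have "E s \<bullet> E s \<le> 0"
  proof (rule gronwall_nonpos[where f = "\<lambda>x. E x \<bullet> E x" and f' = "\<lambda>x. 2 * (E x \<bullet> E' x)"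
        and L = "2 * \<bar>C\<bar>"])
    show "continuous_on {a..b} (\<lambda>x. E x \<bullet> E x)"
      by (intro continuous_intros continuous_on_vector_derivative[OF deriv])
    fix x assume x: "x \<in> {a<..<b}"
    have "(E has_vector_derivative E' x) (at x within {a..b})"
      using x by (intro deriv) auto
    moreover have "at x within {a..b} = at x"
      using x by (intro at_within_Icc_at) auto
    ultimately have E_deriv: "(E has_vector_derivative E' x) (at x)"
      by metis
    show "((\<lambda>x. E x \<bullet> E x) has_real_derivative 2 * (E x \<bullet> E' x)) (at x)"
      using bounded_bilinear.has_vector_derivative[OF bounded_bilinear_inner E_deriv E_deriv]
      by (simp add: has_real_derivative_iff_has_vector_derivative inner_commute)
    have "norm (E' x) \<le> \<bar>C\<bar> * norm (E x)"
      using bound[of x] x mult_right_mono[OF abs_ge_self norm_ge_zero] by (auto intro: order_trans)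
    then have "\<bar>E x \<bullet> E' x\<bar> \<le> norm (E x) * (\<bar>C\<bar> * norm (E x))"
      using Cauchy_Schwarz_ineq2[of "E x" "E' x"] by (meson mult_left_mono norm_ge_zero order_trans)
    then show "\<bar>2 * (E x \<bullet> E' x)\<bar> \<le> 2 * \<bar>C\<bar> * (E x \<bullet> E x)"
      by (simp add: power2_norm_eq_inner[symmetric] power2_eq_square algebra_simps)
  qed (use assms in auto)
  then show ?thesis
    using inner_ge_zero[of "E s"] by simp
qed

lemma ode_solutions_unique:
  fixes X Y :: "real \<Rightarrow> 'a::real_inner"
  assumes "\<And>s. s \<in> {a..b} \<Longrightarrow> (X has_vector_derivative F s (X s)) (at s within {a..b})"
    and "\<And>s. s \<in> {a..b} \<Longrightarrow> (Y has_vector_derivative F s (Y s)) (at s within {a..b})"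
    and "\<And>s. s \<in> {a..b} \<Longrightarrow> norm (F s (X s) - F s (Y s)) \<le> C * norm (X s - Y s)"
    and "c \<in> {a..b}" "X c = Y c" "s \<in> {a..b}"
  shows "X s = Y s"
  using vanishing_if_derivative_linearly_bounded[of a b "\<lambda>s. X s - Y s" "\<lambda>s. F s (X s) - F s (Y s)" C c s]
    assms by (auto intro: derivative_intros)

lemma continuous_on_Icc_norm_bound:
  fixes f :: "real \<Rightarrow> 'a::real_normed_vector"
  assumes "continuous_on {a..b} f"
  obtains M where "\<And>s. s \<in> {a..b} \<Longrightarrow> norm (f s) \<le> M"
proof -
  have "bounded (f ` {a..b})"
    by (intro compact_imp_bounded compact_continuous_image assms compact_Icc)
  then show thesis
    using that unfolding bounded_iff by blast
qed

lemma has_vector_derivative_restrict_Icc: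
  assumes "(f has_vector_derivative f') (at x within {a..b})" and "x \<in> {a..b}"
  shows "((\<lambda>y. if y \<in> {a..b} then f y else 0) has_vector_derivative f') (at x within {a..b})"
  using has_vector_derivative_transform[OF assms(2) _ assms(1)] by simp

section \<open>Characterising the Riccati solution and the transition matrix\<close>

lemma riccati_rhs_lipschitz:
  fixes A K R Q :: "real^'n^'n" and B :: "real^'m^'n"
  shows "norm ((- (transpose A ** R) - R ** A + R ** B ** transpose B ** R - Q)
               - (- (transpose A ** K) - K ** A + K ** B ** transpose B ** K - Q))
         \<le> (2 * norm A + (norm B)\<^sup>2 * (norm R + norm K)) * norm (R - K)"
proof -
  define W where "W = B ** transpose B"
  define E where "E = R - K"
  have W: "norm W \<le> (norm B)\<^sup>2"
    using norm_matrix_mult_le[of B "transpose B"] by (simp add: W_def norm_transpose power2_eq_square)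
  have "(- (transpose A ** R) - R ** A + R ** B ** transpose B ** R - Q)
          - (- (transpose A ** K) - K ** A + K ** B ** transpose B ** K - Q)
        = - (transpose A ** E) - E ** A + (R ** W ** E + E ** W ** K)"
    by (simp add: W_def E_def matrix_mul_assoc matrix_diff_ldistrib matrix_diff_rdistrib)
  also have "norm \<dots> \<le> norm (transpose A ** E) + norm (E ** A) + (norm (R ** W ** E) + norm (E ** W ** K))"
    by norm
  also have "\<dots> \<le> norm A * norm E + norm E * norm A
      + (norm R * (norm B)\<^sup>2 * norm E + norm E * (norm B)\<^sup>2 * norm K)"
  proof -
    have "norm (R ** W ** E) \<le> norm R * (norm B)\<^sup>2 * norm E"
      using norm_matrix_mult_le[of "R ** W" E] norm_matrix_mult_le[of R W] W
      by (meson mult_left_mono mult_right_mono norm_ge_zero order_trans)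
    moreover have "norm (E ** W ** K) \<le> norm E * (norm B)\<^sup>2 * norm K"
      using norm_matrix_mult_le[of "E ** W" K] norm_matrix_mult_le[of E W] W
      by (meson mult_left_mono mult_right_mono norm_ge_zero order_trans)
    ultimately show ?thesis
      using norm_matrix_mult_le[of "transpose A" E, unfolded norm_transpose] norm_matrix_mult_le[of E A]
      by (intro add_mono) (simp_all only: mult.commute)
  qed
  also have "\<dots> = (2 * norm A + (norm B)\<^sup>2 * (norm R + norm K)) * norm (R - K)"
    by (simp add: E_def algebra_simps)
  finally show ?thesis .
qed

lemma riccati_solutions_unique:
  fixes A Q K R :: "real \<Rightarrow> real^'n^'n" and B :: "real \<Rightarrow> real^'m^'n"
  assumes A: "continuous_on {t0..t} A" and B: "continuous_on {t0..t} B"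
    and R: "\<And>\<tau>. \<tau> \<in> {t0..t} \<Longrightarrow> (R has_vector_derivative
      - (transpose (A \<tau>) ** R \<tau>) - R \<tau> ** A \<tau> + R \<tau> ** B \<tau> ** transpose (B \<tau>) ** R \<tau> - Q \<tau>)
      (at \<tau> within {t0..t})"
    and K: "\<And>\<tau>. \<tau> \<in> {t0..t} \<Longrightarrow> (K has_vector_derivative
      - (transpose (A \<tau>) ** K \<tau>) - K \<tau> ** A \<tau> + K \<tau> ** B \<tau> ** transpose (B \<tau>) ** K \<tau> - Q \<tau>)
      (at \<tau> within {t0..t})"
    and "c \<in> {t0..t}" "R c = K c" "\<tau> \<in> {t0..t}"
  shows "R \<tau> = K \<tau>"
proof -
  obtain MA where MA: "\<And>s. s \<in> {t0..t} \<Longrightarrow> norm (A s) \<le> MA"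
    using continuous_on_Icc_norm_bound[OF A] by blast
  obtain MB where MB: "\<And>s. s \<in> {t0..t} \<Longrightarrow> norm (B s) \<le> MB"
    using continuous_on_Icc_norm_bound[OF B] by blast
  obtain MR where MR: "\<And>s. s \<in> {t0..t} \<Longrightarrow> norm (R s) \<le> MR"
    using continuous_on_Icc_norm_bound[OF continuous_on_vector_derivative[OF R]] by blast
  obtain MK where MK: "\<And>s. s \<in> {t0..t} \<Longrightarrow> norm (K s) \<le> MK"
    using continuous_on_Icc_norm_bound[OF continuous_on_vector_derivative[OF K]] by blast
  have lipschitz: "norm ((- (transpose (A s) ** R s) - R s ** A s + R s ** B s ** transpose (B s) ** R s - Q s)
        - (- (transpose (A s) ** K s) - K s ** A s + K s ** B s ** transpose (B s) ** K s - Q s))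
      \<le> (2 * MA + MB\<^sup>2 * (MR + MK)) * norm (R s - K s)" if "s \<in> {t0..t}" for s
  proof -
    have "(norm (B s))\<^sup>2 \<le> MB\<^sup>2"
      using MB[OF that] by (simp add: power_mono)
    then have "2 * norm (A s) + (norm (B s))\<^sup>2 * (norm (R s) + norm (K s)) \<le> 2 * MA + MB\<^sup>2 * (MR + MK)"
      using MA[OF that] MR[OF that] MK[OF that] by (intro add_mono mult_mono) auto
    with riccati_rhs_lipschitz show ?thesis
      by (rule order_trans[OF _ mult_right_mono]) simp
  qed
  show ?thesis
    by (rule ode_solutions_unique[where a = t0 and b = t and c = c and F = "\<lambda>s X.
        - (transpose (A s) ** X) - X ** A s + X ** B s ** transpose (B s) ** X - Q s",
        OF R K lipschitz]) (use assms in simp_all)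
qed

lemma riccati_sol_eqI:
  fixes A Q K :: "real \<Rightarrow> real^'n^'n" and B :: "real \<Rightarrow> real^'m^'n"
  assumes A: "continuous_on {t0..t} A" and B: "continuous_on {t0..t} B" and "t0 \<le> t"
    and K: "\<And>\<tau>. \<tau> \<in> {t0..t} \<Longrightarrow> (K has_vector_derivative
      - (transpose (A \<tau>) ** K \<tau>) - K \<tau> ** A \<tau> + K \<tau> ** B \<tau> ** transpose (B \<tau>) ** K \<tau> - Q \<tau>)
      (at \<tau> within {t0..t})"
    and "K t = K1" and "\<And>\<tau>. \<tau> \<notin> {t0..t} \<Longrightarrow> K \<tau> = 0"
  shows "riccati_sol A B Q t0 t K1 = K"
proof -
  have "R \<tau> = K \<tau>"
    if R: "\<forall>\<tau>\<in>{t0..t}. (R has_vector_derivative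
      - (transpose (A \<tau>) ** R \<tau>) - R \<tau> ** A \<tau> + R \<tau> ** B \<tau> ** transpose (B \<tau>) ** R \<tau> - Q \<tau>)
      (at \<tau> within {t0..t})"
      and "R t = K1" and "\<forall>\<tau>. \<tau> \<notin> {t0..t} \<longrightarrow> R \<tau> = 0" for R \<tau>
  proof (cases "\<tau> \<in> {t0..t}")
    case True
    show ?thesis
      by (rule riccati_solutions_unique[OF A B _ K, of R t]) (use R that assms True in auto)
  qed (use that assms in auto)
  then show ?thesis
    unfolding riccati_sol_def using assms by (intro the_equality) auto
qed

lemma trans_fun_eqI:
  fixes F \<Phi> :: "real \<Rightarrow> real^'n^'n"
  assumes F: "continuous_on {t0..t} F" and "\<tau> \<in> {t0..t}"
    and \<Phi>: "\<And>s. s \<in> {t0..t} \<Longrightarrow> (\<Phi> has_vector_derivative F s ** \<Phi> s) (at s within {t0..t})"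
    and "\<Phi> \<tau> = mat 1" and "\<And>s. s \<notin> {t0..t} \<Longrightarrow> \<Phi> s = 0"
  shows "trans_fun F t0 t \<tau> = \<Phi>"
proof -
  obtain M where M: "\<And>s. s \<in> {t0..t} \<Longrightarrow> norm (F s) \<le> M"
    using continuous_on_Icc_norm_bound[OF F] by blast
  have "\<Psi> s = \<Phi> s"
    if \<Psi>: "\<forall>s\<in>{t0..t}. (\<Psi> has_vector_derivative F s ** \<Psi> s) (at s within {t0..t})"
      and "\<Psi> \<tau> = mat 1" and "\<forall>s. s \<notin> {t0..t} \<longrightarrow> \<Psi> s = 0" for \<Psi> s
  proof (cases "s \<in> {t0..t}")
    case True
    have lipschitz: "norm (F s ** \<Psi> s - F s ** \<Phi> s) \<le> M * norm (\<Psi> s - \<Phi> s)" if "s \<in> {t0..t}" for s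
      using norm_matrix_mult_le[of "F s" "\<Psi> s - \<Phi> s"] M[OF that]
      by (simp add: matrix_diff_ldistrib) (meson mult_right_mono norm_ge_zero order_trans)
    show ?thesis
      by (rule ode_solutions_unique[where a = t0 and b = t and c = \<tau> and F = "\<lambda>s X. F s ** X",
          OF _ \<Phi> lipschitz])
        (use \<Psi> that assms True in auto)
  qed (use that assms in auto)
  then show ?thesis
    unfolding trans_fun_def using assms by (intro the_equality) auto
qed

section \<open>Block matrices\<close>

definition block_mat ::
  "real^'n^'n \<Rightarrow> real^'n^'n \<Rightarrow> real^'n^'n \<Rightarrow> real^'n^'n \<Rightarrow> real^('n + 'n)^('n + 'n)" where
  "block_mat M11 M12 M21 M22 = (\<chi> i j. case i of
      Inl a \<Rightarrow> (case j of Inl b \<Rightarrow> M11 $ a $ b | Inr b \<Rightarrow> M12 $ a $ b)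
    | Inr a \<Rightarrow> (case j of Inl b \<Rightarrow> M21 $ a $ b | Inr b \<Rightarrow> M22 $ a $ b))"

lemma M_mat_eq_block_mat:
  "M_mat A B Q t0 t =
    (let P = Phi_hat A B Q t0 t t0; Gi = matrix_inv (Gamma_hat A B Q t0 t)
     in block_mat (transpose P ** Gi ** P + Pi_ric A B Q t0 t0 0 t) (- (transpose P ** Gi)) (- (Gi ** P)) Gi)"
  by (simp add: M_mat_def block_mat_def Let_def)

lemma sum_UNIV_Plus:
  fixes g :: "'a::finite + 'b::finite \<Rightarrow> 'c::comm_monoid_add"
  shows "(\<Sum>i\<in>UNIV. g i) = (\<Sum>a\<in>UNIV. g (Inl a)) + (\<Sum>b\<in>UNIV. g (Inr b))"
  by (subst UNIV_Plus_UNIV[symmetric], subst sum.Plus) simp_all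

lemma inner_stack_block_mat:
  "stack x y \<bullet> (block_mat M11 M12 M21 M22 *v stack x y)
    = x \<bullet> (M11 *v x) + x \<bullet> (M12 *v y) + y \<bullet> (M21 *v x) + y \<bullet> (M22 *v y)"
  by (simp add: inner_vec_def matrix_vector_mult_def stack_def block_mat_def sum_UNIV_Plus
      sum.distrib sum_distrib_left algebra_simps)

section \<open>The diagonal case\<close>

lemma one_minus_tanh_sq: "1 - (tanh x)\<^sup>2 = 1 / (cosh x)\<^sup>2" for x :: real
proof -
  have "1 - (tanh x)\<^sup>2 = ((cosh x)\<^sup>2 - (sinh x)\<^sup>2) / (cosh x)\<^sup>2"
    using cosh_real_pos[of x] by (simp add: tanh_def power_divide diff_divide_distrib)
  then show ?thesis
    by (simp add: cosh_square_eq)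
qed

lemma coth_eq_sech_sq_coth_add_tanh:
  fixes w x :: real
  assumes "sinh x \<noteq> 0"
  shows "1 / cosh x * (w * cosh x / (2 * sinh x)) * (1 / cosh x) + w / 2 * tanh x
    = w * cosh x / (2 * sinh x)"
proof -
  have "cosh x \<noteq> 0"
    using cosh_real_pos[of x] by simp
  with assms cosh_square_eq[of x] show ?thesis
    by (simp add: tanh_def field_simps) algebra
qed

lemma sqrt2_identity_gram: "(sqrt 2 *\<^sub>R mat 1) ** transpose (sqrt 2 *\<^sub>R mat 1) = (2 *\<^sub>R mat 1 :: real^'n^'n)"
  by (simp add: transpose_scalar matrix_scalar_ac flip: scalar_matrix_assoc)

lemma riccati_rhs_sqrt2_identity:
  fixes K D :: "real^'n^'n"
  shows "- (transpose 0 ** K) - K ** 0 + K ** (sqrt 2 *\<^sub>R mat 1) ** transpose (sqrt 2 *\<^sub>R mat 1) ** K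
      - 2 *\<^sub>R D = 2 *\<^sub>R (K ** K) - 2 *\<^sub>R D"
proof -
  have "K ** (sqrt 2 *\<^sub>R mat 1) ** transpose (sqrt 2 *\<^sub>R mat 1)
      = K ** ((sqrt 2 *\<^sub>R mat 1) ** transpose (sqrt 2 *\<^sub>R mat 1))"
    by (rule matrix_mul_assoc[symmetric])
  also have "\<dots> = 2 *\<^sub>R K"
    by (simp add: sqrt2_identity_gram matrix_scalar_ac)
  finally show ?thesis
    by (simp flip: scalar_matrix_assoc)
qed

definition omega :: "real^'n^'n \<Rightarrow> 'n \<Rightarrow> real" where
  "omega D i = 2 * sqrt (D $ i $ i)"

(* Closed forms of Pi(tau, 0, t) and of the transition matrix of A_hat from sigma to s. *)
definition riccati_tanh :: "real^'n^'n \<Rightarrow> real \<Rightarrow> real \<Rightarrow> real \<Rightarrow> real^'n^'n" where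
  "riccati_tanh D t0 t \<tau> =
    (if \<tau> \<in> {t0..t} then diag_mat (\<lambda>i. omega D i / 2 * tanh (omega D i * (t - \<tau>))) else 0)"

definition transition_cosh :: "real^'n^'n \<Rightarrow> real \<Rightarrow> real \<Rightarrow> real \<Rightarrow> real \<Rightarrow> real^'n^'n" where
  "transition_cosh D t0 t \<sigma> s =
    (if s \<in> {t0..t} then diag_mat (\<lambda>i. cosh (omega D i * (t - s)) / cosh (omega D i * (t - \<sigma>))) else 0)"

context
  fixes D :: "real^'n^'n"
  assumes D_diagonal: "\<forall>i j. i \<noteq> j \<longrightarrow> D $ i $ j = 0" and D_pos: "\<forall>i. D $ i $ i > 0"
begin

lemma omega_pos: "omega D i > 0"
  using D_pos by (simp add: omega_def)

lemma omega_nonzero: "omega D i \<noteq> 0"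
  using omega_pos[of i] by simp

lemma omega_sq: "(omega D i)\<^sup>2 = 4 * D $ i $ i"
  using D_pos by (simp add: omega_def power_mult_distrib less_imp_le)

lemma has_vector_derivative_riccati_tanh:
  assumes "\<tau> \<in> {t0..t}"
  shows "(riccati_tanh D t0 t has_vector_derivative
      2 *\<^sub>R (riccati_tanh D t0 t \<tau> ** riccati_tanh D t0 t \<tau>) - 2 *\<^sub>R D) (at \<tau> within {t0..t})"
proof -
  have "((\<lambda>\<tau>. diag_mat (\<lambda>i. omega D i / 2 * tanh (omega D i * (t - \<tau>)))) has_vector_derivative
      diag_mat (\<lambda>i. omega D i / 2 * ((1 - (tanh (omega D i * (t - \<tau>)))\<^sup>2) * (omega D i * (0 - 1)))))
      (at \<tau> within {t0..t})"
    by (intro has_vector_derivative_diag_mat) (auto intro!: derivative_eq_intros)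
  also have "diag_mat (\<lambda>i. omega D i / 2 * ((1 - (tanh (omega D i * (t - \<tau>)))\<^sup>2) * (omega D i * (0 - 1))))
      = 2 *\<^sub>R (riccati_tanh D t0 t \<tau> ** riccati_tanh D t0 t \<tau>) - 2 *\<^sub>R D"
    using assms omega_sq
    by (subst (3) diag_mat_diagonal[OF D_diagonal])
       (simp add: riccati_tanh_def diag_mat_scaleR diag_mat_eq_iff fun_eq_iff power2_eq_square algebra_simps)
  finally show ?thesis
    using assms unfolding riccati_tanh_def by (rule has_vector_derivative_restrict_Icc)
qed

lemma riccati_sol_eq_riccati_tanh:
  assumes "t0 \<le> t"
  shows "riccati_sol (\<lambda>\<tau>. 0) (\<lambda>\<tau>. sqrt 2 *\<^sub>R mat 1) (\<lambda>\<tau>. 2 *\<^sub>R D) t0 t 0 = riccati_tanh D t0 t"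
proof (rule riccati_sol_eqI)
  fix \<tau> assume "\<tau> \<in> {t0..t}"
  then show "(riccati_tanh D t0 t has_vector_derivative
      - (transpose 0 ** riccati_tanh D t0 t \<tau>) - riccati_tanh D t0 t \<tau> ** 0
      + riccati_tanh D t0 t \<tau> ** (sqrt 2 *\<^sub>R mat 1) ** transpose (sqrt 2 *\<^sub>R mat 1)
        ** riccati_tanh D t0 t \<tau>
      - 2 *\<^sub>R D) (at \<tau> within {t0..t})"
    unfolding riccati_rhs_sqrt2_identity by (rule has_vector_derivative_riccati_tanh)
qed (use assms in \<open>auto simp: riccati_tanh_def\<close>)

lemma A_hat_eq_riccati_tanh:
  assumes "t0 \<le> t"
  shows "A_hat (\<lambda>\<tau>. 0) (\<lambda>\<tau>. sqrt 2 *\<^sub>R mat 1) (\<lambda>\<tau>. 2 *\<^sub>R D) t0 t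
    = (\<lambda>\<tau>. - (2 *\<^sub>R riccati_tanh D t0 t \<tau>))"
  unfolding A_hat_def Pi_ric_def riccati_sol_eq_riccati_tanh[OF assms] sqrt2_identity_gram
  by (simp flip: scalar_matrix_assoc)

lemma has_vector_derivative_transition_cosh:
  assumes "s \<in> {t0..t}"
  shows "(transition_cosh D t0 t \<sigma> has_vector_derivative
      - (2 *\<^sub>R riccati_tanh D t0 t s) ** transition_cosh D t0 t \<sigma> s) (at s within {t0..t})"
proof -
  have "((\<lambda>s. diag_mat (\<lambda>i. cosh (omega D i * (t - s)) / cosh (omega D i * (t - \<sigma>))))
      has_vector_derivative diag_mat (\<lambda>i. sinh (omega D i * (t - s)) * (omega D i * (0 - 1)) / cosh (omega D i * (t - \<sigma>))))
      (at s within {t0..t})"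
    by (intro has_vector_derivative_diag_mat) (auto intro!: derivative_eq_intros)
  also have "diag_mat (\<lambda>i. sinh (omega D i * (t - s)) * (omega D i * (0 - 1)) / cosh (omega D i * (t - \<sigma>)))
      = - (2 *\<^sub>R riccati_tanh D t0 t s) ** transition_cosh D t0 t \<sigma> s"
    using assms cosh_real_pos
    by (simp add: riccati_tanh_def transition_cosh_def diag_mat_scaleR diag_mat_eq_iff fun_eq_iff tanh_def)
  finally show ?thesis
    using assms unfolding transition_cosh_def by (rule has_vector_derivative_restrict_Icc)
qed

lemma trans_fun_eq_transition_cosh:
  assumes "t0 \<le> t" and "\<sigma> \<in> {t0..t}"
  shows "trans_fun (A_hat (\<lambda>\<tau>. 0) (\<lambda>\<tau>. sqrt 2 *\<^sub>R mat 1) (\<lambda>\<tau>. 2 *\<^sub>R D) t0 t) t0 t \<sigma>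
    = transition_cosh D t0 t \<sigma>"
  unfolding A_hat_eq_riccati_tanh[OF assms(1)]
proof (rule trans_fun_eqI[OF _ assms(2)])
  show "continuous_on {t0..t} (\<lambda>\<tau>. - (2 *\<^sub>R riccati_tanh D t0 t \<tau>))"
    using continuous_on_vector_derivative[OF has_vector_derivative_riccati_tanh]
    by (intro continuous_intros)
  show "transition_cosh D t0 t \<sigma> \<sigma> = mat 1"
    using assms(2) cosh_real_pos by (simp add: transition_cosh_def mat_eq_diag_mat)
next
  fix s assume "s \<in> {t0..t}"
  then show "(transition_cosh D t0 t \<sigma> has_vector_derivative
      - (2 *\<^sub>R riccati_tanh D t0 t s) ** transition_cosh D t0 t \<sigma> s) (at s within {t0..t})"
    by (rule has_vector_derivative_transition_cosh)
qed (auto simp: transition_cosh_def)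

lemma Phi_hat_eq_diag_sech:
  assumes "t0 \<le> t" and "\<sigma> \<in> {t0..t}"
  shows "Phi_hat (\<lambda>\<tau>. 0) (\<lambda>\<tau>. sqrt 2 *\<^sub>R mat 1) (\<lambda>\<tau>. 2 *\<^sub>R D) t0 t \<sigma>
    = diag_mat (\<lambda>i. 1 / cosh (omega D i * (t - \<sigma>)))"
  using assms unfolding Phi_hat_def trans_fun_eq_transition_cosh[OF assms] by (simp add: transition_cosh_def)

lemma Gamma_hat_eq_diag_tanh:
  assumes "t0 \<le> t"
  shows "Gamma_hat (\<lambda>\<tau>. 0) (\<lambda>\<tau>. sqrt 2 *\<^sub>R mat 1) (\<lambda>\<tau>. 2 *\<^sub>R D) t0 t
    = diag_mat (\<lambda>i. 2 / omega D i * tanh (omega D i * (t - t0)))"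
proof -
  define \<Phi> where "\<Phi> = Phi_hat (\<lambda>\<tau>. 0) (\<lambda>\<tau>. sqrt 2 *\<^sub>R mat 1) (\<lambda>\<tau>. 2 *\<^sub>R D) t0 t"
  define G where "G \<sigma> = diag_mat (\<lambda>i. - (2 / omega D i) * tanh (omega D i * (t - \<sigma>)))" for \<sigma>
  define g where "g \<sigma> = diag_mat (\<lambda>i. 2 / (cosh (omega D i * (t - \<sigma>)))\<^sup>2)" for \<sigma>
  have "(G has_vector_derivative g \<sigma>) (at \<sigma> within {t0..t})" for \<sigma>
  proof -
    have "(G has_vector_derivative diag_mat (\<lambda>i. - (2 / omega D i) *
        ((1 - (tanh (omega D i * (t - \<sigma>)))\<^sup>2) * (omega D i * (0 - 1))))) (at \<sigma> within {t0..t})"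
      unfolding G_def by (intro has_vector_derivative_diag_mat) (auto intro!: derivative_eq_intros)
    moreover have "diag_mat (\<lambda>i. - (2 / omega D i) *
        ((1 - (tanh (omega D i * (t - \<sigma>)))\<^sup>2) * (omega D i * (0 - 1)))) = g \<sigma>"
      by (simp add: g_def one_minus_tanh_sq diag_mat_eq_iff fun_eq_iff omega_nonzero)
    ultimately show ?thesis
      by simp
  qed
  then have FTC: "(g has_integral G t - G t0) {t0..t}"
    using assms by (intro fundamental_theorem_of_calculus)
  have integrand: "g \<sigma> = \<Phi> \<sigma> ** (sqrt 2 *\<^sub>R mat 1) ** transpose (sqrt 2 *\<^sub>R mat 1) ** transpose (\<Phi> \<sigma>)"
    if "\<sigma> \<in> {t0..t}" for \<sigma>
    unfolding \<Phi>_def Phi_hat_eq_diag_sech[OF assms that]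
    by (simp add: g_def mat_eq_diag_mat diag_mat_scaleR diag_mat_eq_iff fun_eq_iff power2_eq_square)
  have "integral {t0..t} (\<lambda>\<sigma>. \<Phi> \<sigma> ** (sqrt 2 *\<^sub>R mat 1) ** transpose (sqrt 2 *\<^sub>R mat 1) ** transpose (\<Phi> \<sigma>))
      = G t - G t0"
    using has_integral_eq[OF integrand FTC] by (rule integral_unique)
  then show ?thesis
    by (simp add: Gamma_hat_def \<Phi>_def G_def)
qed

lemma M_mat_eq_block_diag:
  assumes "t0 < t"
  shows "M_mat (\<lambda>\<tau>. 0) (\<lambda>\<tau>. sqrt 2 *\<^sub>R mat 1) (\<lambda>\<tau>. 2 *\<^sub>R D) t0 t = block_mat
    (diag_mat (\<lambda>i. omega D i * cosh (omega D i * (t - t0)) / (2 * sinh (omega D i * (t - t0)))))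
    (diag_mat (\<lambda>i. - omega D i / (2 * sinh (omega D i * (t - t0)))))
    (diag_mat (\<lambda>i. - omega D i / (2 * sinh (omega D i * (t - t0)))))
    (diag_mat (\<lambda>i. omega D i * cosh (omega D i * (t - t0)) / (2 * sinh (omega D i * (t - t0)))))"
proof -
  have t0: "t0 \<le> t" "t0 \<in> {t0..t}"
    using assms by auto
  have sinh_pos: "sinh (omega D i * (t - t0)) > 0" for i
    using assms omega_pos[of i] by simp
  have Gamma_inv: "matrix_inv (Gamma_hat (\<lambda>\<tau>. 0) (\<lambda>\<tau>. sqrt 2 *\<^sub>R mat 1) (\<lambda>\<tau>. 2 *\<^sub>R D) t0 t)
      = diag_mat (\<lambda>i. omega D i * cosh (omega D i * (t - t0)) / (2 * sinh (omega D i * (t - t0))))"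
    unfolding Gamma_hat_eq_diag_tanh[OF t0(1)]
    using sinh_pos omega_pos by (subst matrix_inv_diag_mat) (auto simp: tanh_def less_imp_neq[symmetric])
  have sinh_nonzero: "sinh (omega D i * (t - t0)) \<noteq> 0" for i
    using sinh_pos[of i] by linarith
  show ?thesis
    unfolding M_mat_eq_block_mat Let_def Gamma_inv Phi_hat_eq_diag_sech[OF t0] Pi_ric_def
      riccati_sol_eq_riccati_tanh[OF t0(1)] riccati_tanh_def if_P[OF t0(2)]
    by (simp only: transpose_diag_mat matrix_mul_diag_mat diag_mat_add diag_mat_uminus
        coth_eq_sech_sq_coth_add_tanh[OF sinh_nonzero]) (simp add: diag_mat_eq_iff fun_eq_iff)
qed

end

theorem proposition3:
  fixes D :: "real^'n^'n" and t0 t :: real and x y :: "real^'n"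
  assumes "0 \<le> t0" and "t0 < t"
    and "\<forall>i j. i \<noteq> j \<longrightarrow> D $ i $ j = 0"
    and "\<forall>i. D $ i $ i > 0"
  shows "(1/2) * (stack x y \<bullet> (M_mat (\<lambda>\<tau>. 0) (\<lambda>\<tau>. sqrt 2 *\<^sub>R mat 1) (\<lambda>\<tau>. 2 *\<^sub>R D) t0 t
                     *v stack x y))
       = (1/2) * (\<Sum>i\<in>UNIV.
           (let \<omega> = 2 * sqrt (D $ i $ i) in
             (\<omega> * ((x $ i)\<^sup>2 + (y $ i)\<^sup>2) * cosh (\<omega> * (t - t0)) - 2 * \<omega> * x $ i * y $ i)
             / (2 * sinh (\<omega> * (t - t0)))))"
proof -
  let ?c = "\<lambda>i. cosh (omega D i * (t - t0))" and ?s = "\<lambda>i. sinh (omega D i * (t - t0))"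
  have "stack x y \<bullet> (M_mat (\<lambda>\<tau>. 0) (\<lambda>\<tau>. sqrt 2 *\<^sub>R mat 1) (\<lambda>\<tau>. 2 *\<^sub>R D) t0 t *v stack x y)
      = (\<Sum>i\<in>UNIV. omega D i * ?c i / (2 * ?s i) * x $ i * x $ i)
        + (\<Sum>i\<in>UNIV. - omega D i / (2 * ?s i) * x $ i * y $ i)
        + (\<Sum>i\<in>UNIV. - omega D i / (2 * ?s i) * y $ i * x $ i)
        + (\<Sum>i\<in>UNIV. omega D i * ?c i / (2 * ?s i) * y $ i * y $ i)"
    unfolding M_mat_eq_block_diag[OF assms(3,4,2)] inner_stack_block_mat inner_diag_mat ..
  also have "\<dots> = (\<Sum>i\<in>UNIV. (omega D i * ((x $ i)\<^sup>2 + (y $ i)\<^sup>2) * ?c i - 2 * omega D i * x $ i * y $ i)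
      / (2 * ?s i))"
    by (simp add: sum.distrib[symmetric] power2_eq_square add_divide_distrib diff_divide_distrib
        algebra_simps)
  finally show ?thesis
    by (simp add: omega_def Let_def)
qed

end
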